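(* Let $n\ge1$, let $\mathrm{d}_I$ be the interleaving distance on the category of cubically encoded persistence modules over $\mathbb R^n$ with respect to the vector $v=(1,\dots,1)\in\mathbb R^n$, and let $\mathrm{d}_{\|\cdot\|_1}$ be the path metric on this category induced by the Hilbert amplitude $\|M\|_1=\int_{\mathbb R^n}\dim M(x)\,d\lambda(x)$, $\lambda$ the Lebesgue measure. Then for all cubically encoded persistence modules $M,N$ over $\mathbb R^n$, \[ \mathrm{d}_I(M,N)\le 4\big(\mathrm{d}_{\|\cdot\|_1}(M,N)\big)^{1/n}. \]
   Context: $\mathrm{Vect}$ is the category of finite-dimensional vector spaces over a fixed field. A cube in $\mathbb R^n$ is a product $I_1\times\dots\times I_n$ of (possibly unbounded, open/closed/half-open) intervals of $\mathbb R$. A persistence module $M\colon\mathbb R^n\to\mathrm{Vect}$ is cubically encoded if there exist a finite poset $\mathcal P$, an order-preserving map $e\colon\mathbb R^n\to\mathcal P$ whose fibers are finite unions of cubes, a functor $M'\colon\mathcal P\to\mathrm{Vect}$ and an isomorphism $M\cong M'\circ e$; these form a full abelian subcategory of $\mathrm{Vect}^{\mathbb R^n}$. For a vector $v$ and $\varepsilon\ge0$, $M^{+\varepsilon}$ denotes $x\mapsto M(x+\varepsilon v)$. An $\varepsilon$-interleaving between $M$ and $N$ is a pair of natural transformations $\varphi\colon M\to N^{+\varepsilon}$, $\psi\colon N\to M^{+\varepsilon}$ with $\psi_{x+\varepsilon v}\circ\varphi_x=M(x\le x+2\varepsilon v)$ and $\varphi_{x+\varepsilon v}\circ\psi_x=N(x\le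 x+2\varepsilon v)$ for all $x$; $\mathrm{d}_I(M,N)$ is the infimum of $\varepsilon>0$ admitting an $\varepsilon$-interleaving ($\inf\emptyset=\infty$). For an amplitude $\alpha$ on an abelian category $\mathcal{A}$ (a function $\operatorname{ob}\mathcal{A}\to[0,\infty]$ with $\alpha(0)=0$, monotone under sub- and quotient objects in short exact sequences and subadditive: $\alpha(B)\le\alpha(A)+\alpha(C)$ for $0\to A\to B\to C\to0$ exact), the cost of a zigzag $A\xleftarrow{\gamma_1}C_1\xrightarrow{\gamma_2}\cdots\xleftarrow{\gamma_{n-1}}C_n\xrightarrow{\gamma_n}B$ is $\sum_i\alpha(\ker\gamma_i)+\alpha(\operatorname{coker}\gamma_i)$, and the path metric $\mathrm{d}_\alpha(A,B)$ is the infimum of costs of zigzags from $A$ to $B$ ($\inf\emptyset=\infty$). The Hilbert amplitude $\|\cdot\|_1$ is an amplitude on cubically encoded modules. *)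

theory Defs
  imports "HOL-Analysis.Analysis" "Jordan_Normal_Form.DL_Rank"
begin

text \<open>Persistence modules R^n -> Vect over a field 'k, represented in the skeleton of Vect:
  the space at x is 'k^(D x) and the structure maps are matrices F x y for x <= y
  (componentwise order on real^'n).\<close>

type_synonym ('k, 'n) pmod = "(real^'n \<Rightarrow> nat) \<times> (real^'n \<Rightarrow> real^'n \<Rightarrow> 'k mat)"
type_synonym ('k, 'n) pmor = "real^'n \<Rightarrow> 'k mat"

definition pdim :: "('k, 'n) pmod \<Rightarrow> real^'n \<Rightarrow> nat" where
  "pdim M = fst M"

definition pmap :: "('k, 'n) pmod \<Rightarrow> real^'n \<Rightarrow> real^'n \<Rightarrow> 'k mat" where
  "pmap M = snd M"

definition is_pmod :: "('k::field, 'n::finite) pmod \<Rightarrow> bool" where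
  "is_pmod M \<longleftrightarrow>
     (\<forall>x y. x \<le> y \<longrightarrow> pmap M x y \<in> carrier_mat (pdim M y) (pdim M x)) \<and>
     (\<forall>x. pmap M x x = 1\<^sub>m (pdim M x)) \<and>
     (\<forall>x y z. x \<le> y \<longrightarrow> y \<le> z \<longrightarrow> pmap M y z * pmap M x y = pmap M x z)"

definition is_pmor :: "('k::field, 'n::finite) pmod \<Rightarrow> ('k, 'n) pmod \<Rightarrow> ('k, 'n) pmor \<Rightarrow> bool" where
  "is_pmor M N g \<longleftrightarrow>
     (\<forall>x. g x \<in> carrier_mat (pdim N x) (pdim M x)) \<and>
     (\<forall>x y. x \<le> y \<longrightarrow> g y * pmap M x y = pmap N x y * g x)"

definition is_cube :: "(real^'n::finite) set \<Rightarrow> bool" where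
  "is_cube C \<longleftrightarrow> (\<exists>I :: 'n \<Rightarrow> real set. (\<forall>i. is_interval (I i)) \<and> C = {x. \<forall>i. x $ i \<in> I i})"

definition finite_union_of_cubes :: "(real^'n::finite) set \<Rightarrow> bool" where
  "finite_union_of_cubes S \<longleftrightarrow> (\<exists>\<C>. finite \<C> \<and> (\<forall>C\<in>\<C>. is_cube C) \<and> S = \<Union>\<C>)"

text \<open>Cubically encoded modules.  The finite poset is a finite set P of naturals with a
  partial order le on P; the functor M' : P -> Vect is given by dimensions d and matrices G.\<close>
definition cubically_encoded :: "('k::field, 'n::finite) pmod \<Rightarrow> bool" where
  "cubically_encoded M \<longleftrightarrow> is_pmod M \<and>
    (\<exists>(P :: nat set) (le :: nat \<Rightarrow> nat \<Rightarrow> bool) (e :: real^'n \<Rightarrow> nat)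
       (d :: nat \<Rightarrow> nat) (G :: nat \<Rightarrow> nat \<Rightarrow> 'k mat) (\<eta> :: real^'n \<Rightarrow> 'k mat) (\<theta> :: real^'n \<Rightarrow> 'k mat).
      finite P \<and>
      (\<forall>p\<in>P. le p p) \<and>
      (\<forall>p\<in>P. \<forall>q\<in>P. le p q \<longrightarrow> le q p \<longrightarrow> p = q) \<and>
      (\<forall>p\<in>P. \<forall>q\<in>P. \<forall>r\<in>P. le p q \<longrightarrow> le q r \<longrightarrow> le p r) \<and>
      (\<forall>x. e x \<in> P) \<and>
      (\<forall>x y. x \<le> y \<longrightarrow> le (e x) (e y)) \<and>
      (\<forall>p\<in>P. finite_union_of_cubes {x. e x = p}) \<and>
      (\<forall>p\<in>P. \<forall>q\<in>P. le p q \<longrightarrow> G p q \<in> carrier_mat (d q) (d p)) \<and>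
      (\<forall>p\<in>P. G p p = 1\<^sub>m (d p)) \<and>
      (\<forall>p\<in>P. \<forall>q\<in>P. \<forall>r\<in>P. le p q \<longrightarrow> le q r \<longrightarrow> G q r * G p q = G p r) \<and>
      (\<forall>x. \<eta> x \<in> carrier_mat (d (e x)) (pdim M x) \<and> \<theta> x \<in> carrier_mat (pdim M x) (d (e x)) \<and>
           \<theta> x * \<eta> x = 1\<^sub>m (pdim M x) \<and> \<eta> x * \<theta> x = 1\<^sub>m (d (e x))) \<and>
      (\<forall>x y. x \<le> y \<longrightarrow> \<eta> y * pmap M x y = G (e x) (e y) * \<eta> x))"

definition vshift :: "real \<Rightarrow> real^'n::finite \<Rightarrow> real^'n" where
  "vshift \<epsilon> x = x + (\<chi> i. \<epsilon>)"

definition interleaving :: "real \<Rightarrow> ('k::field, 'n::finite) pmod \<Rightarrow> ('k, 'n) pmod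
    \<Rightarrow> ('k, 'n) pmor \<Rightarrow> ('k, 'n) pmor \<Rightarrow> bool" where
  "interleaving \<epsilon> M N \<phi> \<psi> \<longleftrightarrow>
     (\<forall>x. \<phi> x \<in> carrier_mat (pdim N (vshift \<epsilon> x)) (pdim M x)) \<and>
     (\<forall>x y. x \<le> y \<longrightarrow> \<phi> y * pmap M x y = pmap N (vshift \<epsilon> x) (vshift \<epsilon> y) * \<phi> x) \<and>
     (\<forall>x. \<psi> x \<in> carrier_mat (pdim M (vshift \<epsilon> x)) (pdim N x)) \<and>
     (\<forall>x y. x \<le> y \<longrightarrow> \<psi> y * pmap N x y = pmap M (vshift \<epsilon> x) (vshift \<epsilon> y) * \<psi> x) \<and>
     (\<forall>x. \<psi> (vshift \<epsilon> x) * \<phi> x = pmap M x (vshift (2 * \<epsilon>) x)) \<and>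
     (\<forall>x. \<phi> (vshift \<epsilon> x) * \<psi> x = pmap N x (vshift (2 * \<epsilon>) x))"

definition interleaving_distance :: "('k::field, 'n::finite) pmod \<Rightarrow> ('k, 'n) pmod \<Rightarrow> ennreal" where
  "interleaving_distance M N =
     Inf (ennreal ` {\<epsilon>. \<epsilon> > 0 \<and> (\<exists>\<phi> \<psi>. interleaving \<epsilon> M N \<phi> \<psi>)})"

definition hilbert_amp :: "(real^'n::finite \<Rightarrow> nat) \<Rightarrow> ennreal" where
  "hilbert_amp D = (\<integral>\<^sup>+ x. ennreal (real (D x)) \<partial>lborel)"

text \<open>Pointwise dimensions of kernel and cokernel of a morphism g : A -> B:
  (ker g)(x) = ker (g x), (coker g)(x) = B(x) / im (g x).\<close>
definition ker_dim :: "('k::field, 'n::finite) pmod \<Rightarrow> ('k, 'n) pmod \<Rightarrow> ('k, 'n) pmor \<Rightarrow> real^'n \<Rightarrow> nat" where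
  "ker_dim A B g x = pdim A x - vec_space.rank (pdim B x) (g x)"

definition coker_dim :: "('k::field, 'n::finite) pmod \<Rightarrow> ('k, 'n) pmod \<Rightarrow> ('k, 'n) pmor \<Rightarrow> real^'n \<Rightarrow> nat" where
  "coker_dim A B g x = pdim B x - vec_space.rank (pdim B x) (g x)"

definition arrow_cost :: "('k::field, 'n::finite) pmod \<Rightarrow> ('k, 'n) pmod \<Rightarrow> ('k, 'n) pmor \<Rightarrow> ennreal" where
  "arrow_cost A B g = hilbert_amp (ker_dim A B g) + hilbert_amp (coker_dim A B g)"

text \<open>Zigzag A = X 0 <-l1- C 1 -r1-> X 1 <-l2- ... -rm-> X m = B in the category of
  cubically encoded modules, and its cost.\<close>
definition is_zigzag :: "('k::field, 'n::finite) pmod \<Rightarrow> ('k, 'n) pmod \<Rightarrow> nat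
    \<Rightarrow> (nat \<Rightarrow> ('k, 'n) pmod) \<Rightarrow> (nat \<Rightarrow> ('k, 'n) pmod)
    \<Rightarrow> (nat \<Rightarrow> ('k, 'n) pmor) \<Rightarrow> (nat \<Rightarrow> ('k, 'n) pmor) \<Rightarrow> bool" where
  "is_zigzag A B m X C l r \<longleftrightarrow>
     X 0 = A \<and> X m = B \<and>
     (\<forall>i\<le>m. cubically_encoded (X i)) \<and>
     (\<forall>i\<in>{1..m}. cubically_encoded (C i) \<and>
        is_pmor (C i) (X (i - 1)) (l i) \<and> is_pmor (C i) (X i) (r i))"

definition zigzag_cost :: "nat \<Rightarrow> (nat \<Rightarrow> ('k::field, 'n::finite) pmod) \<Rightarrow> (nat \<Rightarrow> ('k, 'n) pmod)
    \<Rightarrow> (nat \<Rightarrow> ('k, 'n) pmor) \<Rightarrow> (nat \<Rightarrow> ('k, 'n) pmor) \<Rightarrow> ennreal" where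
  "zigzag_cost m X C l r =
     (\<Sum>i\<in>{1..m}. arrow_cost (C i) (X (i - 1)) (l i) + arrow_cost (C i) (X i) (r i))"

definition hilbert_path_metric :: "('k::field, 'n::finite) pmod \<Rightarrow> ('k, 'n) pmod \<Rightarrow> ennreal" where
  "hilbert_path_metric A B =
     Inf {zigzag_cost m X C l r | m X C l r. is_zigzag A B m X C l r}"

end

theory Submission
  imports Defs
begin

(* Let c be the cost of a zigzag from M to N and suppose c < e^n. The pointwise total dimension
   of the kernels and cokernels of its arrows is an integer-valued function whose integral is c;
   it is measurable because cubical encodings make it constant on the cubes of finitely many
   fibres. Hence it vanishes somewhere in every box [x, x + e v], which has volume e^n. At the
   points y where it vanishes all arrows are invertible, and composing them and their inverses
   gives isomorphisms M(y) = N(y), natural in y. Routing x -> y -> x + 2e v through such a point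
   with x <= y <= x + e v turns them into a 2e-interleaving. Letting e decrease to c^(1/n) gives
   d_I(M, N) <= 2 c^(1/n), which is stronger than the stated bound. *)

section \<open>Matrices\<close>

(* Stated with equations between dimensions rather than carrier_mat premises, so that the
   simplifier can discharge the side conditions; with mult_left_inverse_assoc it normalises
   products to right-nested form and cancels inverse pairs there. *)
lemma mult_assoc_dims:
  fixes A :: "'a::semiring_0 mat"
  shows "dim_col A = dim_row B \<Longrightarrow> dim_col B = dim_row C \<Longrightarrow> A * B * C = A * (B * C)"
  by (rule assoc_mult_mat) auto

lemma mult_left_inverse_assoc:
  fixes A :: "'a::semiring_1 mat"
  assumes "A' * A = 1\<^sub>m (dim_col A)" "dim_col A' = dim_row A" "dim_row B = dim_col A"
  shows "A' * (A * B) = B"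
  using assms by (simp flip: mult_assoc_dims)

lemma rank_mult_le_rank_left:
  fixes A :: "'a::field mat"
  assumes A: "A \<in> carrier_mat n k" and B: "B \<in> carrier_mat k j"
  shows "vec_space.rank n (A * B) \<le> vec_space.rank n A"
proof -
  interpret vs: vec_space "TYPE('a)" n .
  have AB: "A * B \<in> carrier_mat n j" using A B by auto
  have col_space_sub: "vs.col_space (A * B) \<subseteq> vs.col_space A"
    unfolding vs.col_space_eq[OF A] vs.col_space_eq[OF AB]
  proof safe
    fix x :: "'a vec" assume x: "x \<in> carrier_vec (dim_col (A * B))"
    show "\<exists>y\<in>carrier_vec (dim_col A). A *\<^sub>v y = A * B *\<^sub>v x"
      using x A B by (intro bexI[of _ "B *\<^sub>v x"]) (auto simp: assoc_mult_mat_vec)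
  qed (use A B in auto)
  have "set (cols A) \<subseteq> carrier_vec n" "set (cols (A * B)) \<subseteq> carrier_vec n"
    using A AB cols_dim[of A] cols_dim[of "A * B"] by (metis carrier_matD(1))+
  then have A_sub: "subspace class_ring (vs.col_space A) vs.V"
    and AB_sub: "subspace class_ring (vs.col_space (A * B)) vs.V"
    unfolding vs.col_space_def by (auto intro: vs.span_is_subspace)
  have "vectorspace.dim class_ring ((vs.vs (vs.col_space A))\<lparr>carrier := vs.col_space (A * B)\<rparr>)
      \<le> vectorspace.dim class_ring (vs.vs (vs.col_space A))"
  proof (rule vectorspace.subspace_dim)
    show "vectorspace class_ring (vs.vs (vs.col_space A))" using vs.subspace_is_vs[OF A_sub] .
    show "subspace class_ring (vs.col_space (A * B)) (vs.vs (vs.col_space A))"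
      using vs.nested_subspaces[OF A_sub AB_sub col_space_sub] .
    show "vectorspace.fin_dim class_ring (vs.vs (vs.col_space A))"
      using vs.fin_dim_span_cols[OF A] unfolding vs.col_space_def .
    show "vectorspace.fin_dim class_ring ((vs.vs (vs.col_space A))\<lparr>carrier := vs.col_space (A * B)\<rparr>)"
      using vs.fin_dim_span_cols[OF AB] unfolding vs.col_space_def by simp
  qed
  then show ?thesis unfolding vs.rank_def vs.col_space_def by simp
qed

lemma (in vec_space) mult_mat_vec_linear_map:
  assumes P: "P \<in> carrier_mat m n" and U: "subspace class_ring U V"
  shows "linear_map class_ring (vs U) (module_vec TYPE('a) m) (\<lambda>v. P *\<^sub>v v)"
proof -
  interpret W: vec_space "TYPE('a)" m .
  have U_vs: "vectorspace class_ring (vs U)" using subspace_is_vs[OF U] .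
  have U_vec: "U \<subseteq> carrier_vec n" using U unfolding subspace_def submodule_def by simp
  show ?thesis
    unfolding linear_map_def mod_hom_def mod_hom_axioms_def LinearCombinations.module_hom_def
  proof (intro conjI U_vs W.vectorspace_axioms W.module_axioms CollectI allI impI)
    show "Module.module class_ring (vs U)" using U_vs by (simp add: vectorspace_def)
    show "(\<lambda>v. P *\<^sub>v v) \<in> carrier (vs U) \<rightarrow> carrier W.V" using U_vec P by auto
    fix v w :: "'a vec" assume "v \<in> carrier (vs U) \<and> w \<in> carrier (vs U)"
    then have "v \<in> carrier_vec n" "w \<in> carrier_vec n" using U_vec by auto
    then show "P *\<^sub>v (v \<oplus>\<^bsub>vs U\<^esub> w) = (P *\<^sub>v v) \<oplus>\<^bsub>W.V\<^esub> (P *\<^sub>v w)"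
      using P by (simp add: mult_add_distrib_mat_vec)
  next
    fix c :: 'a and v :: "'a vec" assume "c \<in> carrier class_ring \<and> v \<in> carrier (vs U)"
    then have "v \<in> carrier_vec n" using U_vec by auto
    then show "P *\<^sub>v (c \<odot>\<^bsub>vs U\<^esub> v) = c \<odot>\<^bsub>W.V\<^esub> (P *\<^sub>v v)"
      using P by (simp add: mult_mat_vec)
  qed
qed

lemma rank_mult_le_rank_right:
  fixes A :: "'a::field mat"
  assumes P: "P \<in> carrier_mat m n" and A: "A \<in> carrier_mat n k"
  shows "vec_space.rank m (P * A) \<le> vec_space.rank n A"
proof -
  interpret vs: vec_space "TYPE('a)" n .
  interpret ws: vec_space "TYPE('a)" m .
  let ?U = "vs.vs (vs.col_space A)"
  have PA: "P * A \<in> carrier_mat m k" using P A by auto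
  have "set (cols A) \<subseteq> carrier_vec n" using A cols_dim[of A] by (metis carrier_matD(1))
  then have A_sub: "subspace class_ring (vs.col_space A) vs.V"
    unfolding vs.col_space_def by (rule vs.span_is_subspace)
  have A_fin: "vectorspace.fin_dim class_ring ?U"
    using vs.fin_dim_span_cols[OF A] unfolding vs.col_space_def .
  have lin: "linear_map class_ring ?U ws.V (\<lambda>v. P *\<^sub>v v)"
    by (rule vs.mult_mat_vec_linear_map[OF P A_sub])
  have "mod_hom class_ring ?U ws.V (\<lambda>v. P *\<^sub>v v)" using lin unfolding linear_map_def by simp
  then have "mod_hom.im ?U (\<lambda>v. P *\<^sub>v v) = (\<lambda>v. P *\<^sub>v v) ` vs.col_space A"
    by (simp add: mod_hom.im_def)
  also have "\<dots> = ws.col_space (P * A)"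
    unfolding ws.col_space_eq[OF PA] vs.col_space_eq[OF A]
    using P A by (auto simp: image_def)
      (metis (no_types) assoc_mult_mat_vec carrier_matD(2) mult_mat_vec_carrier)+
  finally have im: "mod_hom.im ?U (\<lambda>v. P *\<^sub>v v) = ws.col_space (P * A)" .
  have "vectorspace.dim class_ring (ws.vs (ws.col_space (P * A))) \<le> vectorspace.dim class_ring ?U"
    using linear_map.rank_nullity[OF lin A_fin] unfolding im by linarith
  then show ?thesis unfolding vs.rank_def ws.rank_def vs.col_space_def ws.col_space_def .
qed

lemma rank_one_mat: "vec_space.rank n (1\<^sub>m n :: 'a::field mat) = n"
  using vec_space.det_rank_iff[of "1\<^sub>m n :: 'a mat" n] by simp

lemma rank_le_nr:
  fixes A :: "'a::field mat"
  assumes "A \<in> carrier_mat n k"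
  shows "vec_space.rank n A \<le> n"
  using rank_mult_le_rank_left[OF one_carrier_mat assms] assms rank_one_mat[where 'a='a] by simp

lemma rank_mult_left_invertible:
  fixes A :: "'a::field mat"
  assumes P: "P \<in> carrier_mat m n" and P': "P' \<in> carrier_mat n m" and inv: "P' * P = 1\<^sub>m n"
    and A: "A \<in> carrier_mat n k"
  shows "vec_space.rank m (P * A) = vec_space.rank n A"
proof (rule antisym)
  have "vec_space.rank n A = vec_space.rank n (P' * (P * A))"
    using P P' A inv by (simp flip: assoc_mult_mat)
  also have "\<dots> \<le> vec_space.rank m (P * A)" using P A by (intro rank_mult_le_rank_right[OF P']) auto
  finally show "vec_space.rank n A \<le> vec_space.rank m (P * A)" .
qed (rule rank_mult_le_rank_right[OF P A])

lemma rank_mult_right_invertible: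
  fixes A :: "'a::field mat"
  assumes Q: "Q \<in> carrier_mat k j" and Q': "Q' \<in> carrier_mat j k" and inv: "Q * Q' = 1\<^sub>m k"
    and A: "A \<in> carrier_mat n k"
  shows "vec_space.rank n (A * Q) = vec_space.rank n A"
proof (rule antisym)
  have "vec_space.rank n A = vec_space.rank n (A * Q * Q')"
    using Q Q' A inv by simp
  also have "\<dots> \<le> vec_space.rank n (A * Q)" using Q A by (intro rank_mult_le_rank_left[OF _ Q']) auto
  finally show "vec_space.rank n A \<le> vec_space.rank n (A * Q)" .
qed (rule rank_mult_le_rank_left[OF A Q])

lemma rank_eq_if_commute:
  fixes g :: "'a::field mat"
  assumes g: "g \<in> carrier_mat n k" and g': "g' \<in> carrier_mat n' k'"
    and P: "P \<in> carrier_mat k' k" "P' \<in> carrier_mat k k'" "P * P' = 1\<^sub>m k'"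
    and Q: "Q \<in> carrier_mat n' n" "Q' \<in> carrier_mat n n'" "Q' * Q = 1\<^sub>m n"
    and comm: "g' * P = Q * g"
  shows "vec_space.rank n' g' = vec_space.rank n g"
proof -
  have "vec_space.rank n' g' = vec_space.rank n' (g' * P)"
    using rank_mult_right_invertible[OF P g'] by simp
  also have "\<dots> = vec_space.rank n g"
    unfolding comm by (rule rank_mult_left_invertible[OF Q g])
  finally show ?thesis .
qed

lemma dim_eq_if_inverse:
  fixes A :: "'a::field mat"
  assumes A: "A \<in> carrier_mat n m" and B: "B \<in> carrier_mat m n" and "A * B = 1\<^sub>m n" "B * A = 1\<^sub>m m"
  shows "n = m"
proof -
  have le: "k \<le> k'" if "X \<in> carrier_mat k k'" "Y \<in> carrier_mat k' k" "X * Y = 1\<^sub>m k"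
    for k k' and X Y :: "'a mat"
    using rank_mult_le_rank_left[OF that(1,2)] vec_space.rank_le_nc[OF that(1)] that(3)
      rank_one_mat[where 'a='a] by simp
  show ?thesis using le[OF A B] le[OF B A] assms(3,4) by simp
qed

lemma inverse_if_full_rank:
  fixes A :: "'a::field mat"
  assumes A: "A \<in> carrier_mat n m" and "m \<le> vec_space.rank n A" and "n \<le> vec_space.rank n A"
  shows "\<exists>B \<in> carrier_mat m n. B * A = 1\<^sub>m m \<and> A * B = 1\<^sub>m n"
proof -
  have "m = n" using assms vec_space.rank_le_nc[OF A] rank_le_nr[OF A] by simp
  then have A': "A \<in> carrier_mat n n" using A by simp
  have "det A \<noteq> 0" using vec_space.det_rank_iff[OF A'] rank_le_nr[OF A] assms(3) by simp
  from det_non_zero_imp_unit[OF A' this, of "()"] show ?thesis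
    unfolding Units_def using \<open>m = n\<close> by (auto simp: ring_mat_simps)
qed

lemma inverse_of_mult:
  fixes A :: "'a::semiring_1 mat"
  assumes "A \<in> carrier_mat n k" "A' \<in> carrier_mat k n" "A' * A = 1\<^sub>m k" "A * A' = 1\<^sub>m n"
    and "B \<in> carrier_mat m n" "B' \<in> carrier_mat n m" "B' * B = 1\<^sub>m n" "B * B' = 1\<^sub>m m"
  shows "A' * B' * (B * A) = 1\<^sub>m k" and "B * A * (A' * B') = 1\<^sub>m m"
  using assms by (simp_all add: mult_assoc_dims mult_left_inverse_assoc carrier_matD)

lemma inverse_commute:
  fixes A :: "'a::semiring_1 mat"
  assumes "A \<in> carrier_mat n m" "A' \<in> carrier_mat m n" "A * A' = 1\<^sub>m n"
    and "B \<in> carrier_mat n' m'" "B' \<in> carrier_mat m' n'" "B' * B = 1\<^sub>m m'"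
    and "P \<in> carrier_mat m' m" "Q \<in> carrier_mat n' n" and comm: "B * P = Q * A"
  shows "B' * Q = P * A'"
proof -
  have "B' * Q = B' * (Q * A * A')" using assms by simp
  also have "\<dots> = B' * (B * (P * A'))" using assms(1-8) by (simp flip: comm)
  also have "\<dots> = P * A'" using assms by (simp add: mult_left_inverse_assoc carrier_matD)
  finally show ?thesis .
qed

section \<open>Persistence modules\<close>

lemma pmap_carrier: "is_pmod M \<Longrightarrow> x \<le> y \<Longrightarrow> pmap M x y \<in> carrier_mat (pdim M y) (pdim M x)"
  unfolding is_pmod_def by blast

lemma pmap_dims:
  assumes "is_pmod M" "x \<le> y"
  shows "dim_row (pmap M x y) = pdim M y" "dim_col (pmap M x y) = pdim M x"
  using pmap_carrier[OF assms] by auto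

lemma pmap_comp: "is_pmod M \<Longrightarrow> x \<le> y \<Longrightarrow> y \<le> z \<Longrightarrow> pmap M y z * pmap M x y = pmap M x z"
  unfolding is_pmod_def by blast

lemma pmap_id: "is_pmod M \<Longrightarrow> pmap M x x = 1\<^sub>m (pdim M x)"
  unfolding is_pmod_def by blast

lemma cubically_encoded_is_pmod: "cubically_encoded M \<Longrightarrow> is_pmod M"
  unfolding cubically_encoded_def by blast

lemma vshift_vshift [simp]: "vshift a (vshift b x) = vshift (a + b) x"
  by (simp add: vshift_def Finite_Cartesian_Product.vec_eq_iff)

lemma vshift_mono: "x \<le> y \<Longrightarrow> vshift e x \<le> vshift e y"
  by (simp add: vshift_def Finite_Cartesian_Product.less_eq_vec_def)

lemma vshift_le_vshift: "a \<le> b \<Longrightarrow> vshift a x \<le> vshift b x"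
  by (simp add: vshift_def Finite_Cartesian_Product.less_eq_vec_def)

definition natural_iso_on :: "(real^'n) set \<Rightarrow> ('k::field, 'n::finite) pmod \<Rightarrow> ('k, 'n) pmod
    \<Rightarrow> ('k, 'n) pmor \<Rightarrow> ('k, 'n) pmor \<Rightarrow> bool" where
  "natural_iso_on G M N \<Phi> \<Psi> \<longleftrightarrow>
     (\<forall>y\<in>G. \<Phi> y \<in> carrier_mat (pdim N y) (pdim M y) \<and> \<Psi> y \<in> carrier_mat (pdim M y) (pdim N y) \<and>
        \<Psi> y * \<Phi> y = 1\<^sub>m (pdim M y) \<and> \<Phi> y * \<Psi> y = 1\<^sub>m (pdim N y)) \<and>
     (\<forall>y\<in>G. \<forall>y'\<in>G. y \<le> y' \<longrightarrow> \<Phi> y' * pmap M y y' = pmap N y y' * \<Phi> y)"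

lemma natural_iso_onD:
  assumes "natural_iso_on G M N \<Phi> \<Psi>" "y \<in> G"
  shows "\<Phi> y \<in> carrier_mat (pdim N y) (pdim M y)" "\<Psi> y \<in> carrier_mat (pdim M y) (pdim N y)"
    "\<Psi> y * \<Phi> y = 1\<^sub>m (pdim M y)" "\<Phi> y * \<Psi> y = 1\<^sub>m (pdim N y)"
  using assms unfolding natural_iso_on_def by auto

lemma natural_iso_on_commute:
  "natural_iso_on G M N \<Phi> \<Psi> \<Longrightarrow> y \<in> G \<Longrightarrow> y' \<in> G \<Longrightarrow> y \<le> y' \<Longrightarrow>
    \<Phi> y' * pmap M y y' = pmap N y y' * \<Phi> y"
  unfolding natural_iso_on_def by blast

lemma natural_iso_on_refl:
  assumes "is_pmod M"
  shows "natural_iso_on G M M (\<lambda>y. 1\<^sub>m (pdim M y)) (\<lambda>y. 1\<^sub>m (pdim M y))"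
  using assms by (simp add: natural_iso_on_def pmap_dims)

lemma natural_iso_on_sym:
  assumes M: "is_pmod M" and N: "is_pmod N" and iso: "natural_iso_on G M N \<Phi> \<Psi>"
  shows "natural_iso_on G N M \<Psi> \<Phi>"
proof -
  have "\<Psi> y' * pmap N y y' = pmap M y y' * \<Psi> y" if "y \<in> G" "y' \<in> G" "y \<le> y'" for y y'
    using natural_iso_onD[OF iso that(1)] natural_iso_onD[OF iso that(2)]
    by (intro inverse_commute[OF _ _ _ _ _ _ pmap_carrier[OF M that(3)] pmap_carrier[OF N that(3)]
          natural_iso_on_commute[OF iso that]])
  then show ?thesis using iso unfolding natural_iso_on_def by auto
qed

lemma natural_iso_on_trans:
  assumes L: "is_pmod L" and M: "is_pmod M" and N: "is_pmod N"
    and iso: "natural_iso_on G L M \<Phi> \<Psi>" and iso': "natural_iso_on G M N \<Phi>' \<Psi>'"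
  shows "natural_iso_on G L N (\<lambda>y. \<Phi>' y * \<Phi> y) (\<lambda>y. \<Psi> y * \<Psi>' y)"
  unfolding natural_iso_on_def
proof (intro conjI ballI impI)
  fix y assume "y \<in> G"
  note D = natural_iso_onD[OF iso this] natural_iso_onD[OF iso' this]
  show "\<Phi>' y * \<Phi> y \<in> carrier_mat (pdim N y) (pdim L y)"
    and "\<Psi> y * \<Psi>' y \<in> carrier_mat (pdim L y) (pdim N y)" using D by auto
  show "\<Psi> y * \<Psi>' y * (\<Phi>' y * \<Phi> y) = 1\<^sub>m (pdim L y)"
    and "\<Phi>' y * \<Phi> y * (\<Psi> y * \<Psi>' y) = 1\<^sub>m (pdim N y)"
    by (rule inverse_of_mult[OF D])+
next
  fix y y' assume y: "y \<in> G" "y' \<in> G" "y \<le> y'"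
  note C = natural_iso_onD(1)[OF iso y(1)] natural_iso_onD(1)[OF iso' y(1)]
    natural_iso_onD(1)[OF iso y(2)] natural_iso_onD(1)[OF iso' y(2)]
  note dims = C[THEN carrier_matD(1)] C[THEN carrier_matD(2)]
    pmap_dims[OF L y(3)] pmap_dims[OF M y(3)] pmap_dims[OF N y(3)]
  have "\<Phi>' y' * \<Phi> y' * pmap L y y' = \<Phi>' y' * (pmap M y y' * \<Phi> y)"
    using dims by (simp add: mult_assoc_dims natural_iso_on_commute[OF iso y])
  also have "\<dots> = pmap N y y' * \<Phi>' y * \<Phi> y"
    using dims by (simp add: mult_assoc_dims natural_iso_on_commute[OF iso' y, symmetric])
  finally show "\<Phi>' y' * \<Phi> y' * pmap L y y' = pmap N y y' * (\<Phi>' y * \<Phi> y)"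
    using dims by (simp add: mult_assoc_dims)
qed

section \<open>Interleavings from isomorphisms on a box-dense set\<close>

definition through :: "('k::field, 'n::finite) pmod \<Rightarrow> ('k, 'n) pmod \<Rightarrow> ('k, 'n) pmor
    \<Rightarrow> real^'n \<Rightarrow> real^'n \<Rightarrow> real^'n \<Rightarrow> 'k mat" where
  "through M N \<Phi> x y w = pmap N y w * (\<Phi> y * pmap M x y)"

context
  fixes M N :: "('k::field, 'n::finite) pmod" and \<Phi> \<Psi> :: "('k, 'n) pmor" and G :: "(real^'n) set"
  assumes M: "is_pmod M" and N: "is_pmod N" and iso: "natural_iso_on G M N \<Phi> \<Psi>"
begin

lemma through_carrier:
  assumes "y \<in> G" "x \<le> y" "y \<le> w"
  shows "through M N \<Phi> x y w \<in> carrier_mat (pdim N w) (pdim M x)"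
  unfolding through_def
  by (rule mult_carrier_mat[OF pmap_carrier[OF N assms(3)]
        mult_carrier_mat[OF natural_iso_onD(1)[OF iso assms(1)] pmap_carrier[OF M assms(2)]]])

lemma pmap_mult_through:
  assumes "y \<in> G" "x \<le> y" "y \<le> w" "w \<le> w'"
  shows "pmap N w w' * through M N \<Phi> x y w = through M N \<Phi> x y w'"
proof -
  have "y \<le> w'" using assms(3,4) by (rule order.trans)
  then show ?thesis
    using assms carrier_matD[OF natural_iso_onD(1)[OF iso assms(1)]] pmap_dims[OF M] pmap_dims[OF N]
    by (simp add: through_def mult_assoc_dims flip: pmap_comp[OF N assms(3,4)])
qed

lemma through_mult_pmap:
  assumes "y \<in> G" "x \<le> x'" "x' \<le> y" "y \<le> w"
  shows "through M N \<Phi> x' y w * pmap M x x' = through M N \<Phi> x y w"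
proof -
  have "x \<le> y" using assms(2,3) by (rule order.trans)
  then show ?thesis
    using assms carrier_matD[OF natural_iso_onD(1)[OF iso assms(1)]] pmap_dims[OF M] pmap_dims[OF N]
    by (simp add: through_def mult_assoc_dims pmap_comp[OF M assms(2,3)])
qed

lemma through_indep:
  assumes "y \<in> G" "y' \<in> G" and le: "x \<le> y" "y \<le> y'" "y' \<le> w"
  shows "through M N \<Phi> x y w = through M N \<Phi> x y' w"
proof -
  have yw: "y \<le> w" and xy': "x \<le> y'" using le by (auto intro: order.trans)
  note dims = natural_iso_onD(1)[OF iso \<open>y \<in> G\<close>, THEN carrier_matD(1)]
    natural_iso_onD(1)[OF iso \<open>y \<in> G\<close>, THEN carrier_matD(2)]
    natural_iso_onD(1)[OF iso \<open>y' \<in> G\<close>, THEN carrier_matD(1)]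
    natural_iso_onD(1)[OF iso \<open>y' \<in> G\<close>, THEN carrier_matD(2)]
    pmap_dims[OF M] pmap_dims[OF N]
  have "through M N \<Phi> x y w = pmap N y' w * (pmap N y y' * \<Phi> y) * pmap M x y"
    using le dims yw by (simp add: through_def mult_assoc_dims flip: pmap_comp[OF N le(2,3)])
  also have "\<dots> = pmap N y' w * (\<Phi> y' * (pmap M y y' * pmap M x y))"
    using le dims yw xy'
    by (simp add: mult_assoc_dims flip: natural_iso_on_commute[OF iso \<open>y \<in> G\<close> \<open>y' \<in> G\<close> le(2)])
  also have "\<dots> = through M N \<Phi> x y' w"
    by (simp add: through_def pmap_comp[OF M le(1,2)])
  finally show ?thesis .
qed

lemma through_inverse:
  assumes "y \<in> G" "y' \<in> G" and le: "x \<le> y" "y \<le> z" "z \<le> y'" "y' \<le> t"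
  shows "through N M \<Psi> z y' t * through M N \<Phi> x y z = pmap M x t"
proof -
  have le': "y \<le> y'" "x \<le> y'" "y' \<le> y'" using le by (auto intro: order.trans)
  note C = natural_iso_onD[OF iso \<open>y \<in> G\<close>] natural_iso_onD[OF iso \<open>y' \<in> G\<close>]
  have key: "pmap N z y' * through M N \<Phi> x y z = \<Phi> y' * pmap M x y'"
    using pmap_mult_through[OF \<open>y \<in> G\<close> le(1,2,3)] through_indep[OF \<open>y \<in> G\<close> \<open>y' \<in> G\<close> le(1) le'(1,3)]
      C(5) pmap_carrier[OF M le'(2)] by (simp add: through_def pmap_id[OF N])
  have "through N M \<Psi> z y' t * through M N \<Phi> x y z
      = pmap M y' t * (\<Psi> y' * (pmap N z y' * through M N \<Phi> x y z))"
    using carrier_matD[OF C(6)] pmap_dims[OF M le(4)] pmap_dims[OF N le(3)] pmap_dims[OF N le(2)]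
    by (simp add: through_def mult_assoc_dims)
  also have "\<dots> = pmap M x t"
    using C(6,7) carrier_matD[OF C(5)] pmap_dims[OF M le'(2)] pmap_comp[OF M le'(2) le(4)]
    by (simp add: key mult_left_inverse_assoc)
  finally show ?thesis .
qed

end

definition box_dense :: "real \<Rightarrow> (real^'n::finite) set \<Rightarrow> bool" where
  "box_dense e G \<longleftrightarrow> (\<forall>x. \<exists>y\<in>G. x \<le> y \<and> y \<le> vshift e x)"

definition box_point :: "real \<Rightarrow> (real^'n::finite) set \<Rightarrow> real^'n \<Rightarrow> real^'n" where
  "box_point e G x = (SOME y. y \<in> G \<and> x \<le> y \<and> y \<le> vshift e x)"

lemma box_point:
  assumes "box_dense e G"
  shows "box_point e G x \<in> G" "x \<le> box_point e G x" "box_point e G x \<le> vshift e x"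
proof -
  have "\<exists>y. y \<in> G \<and> x \<le> y \<and> y \<le> vshift e x" using assms unfolding box_dense_def by blast
  from someI_ex[OF this] show "box_point e G x \<in> G" "x \<le> box_point e G x" "box_point e G x \<le> vshift e x"
    unfolding box_point_def by auto
qed

lemma box_point_le_vshift2:
  assumes "box_dense e G" "0 \<le> e"
  shows "box_point e G x \<le> vshift (2 * e) x"
  using box_point(3)[OF assms(1)] vshift_le_vshift[of e "2 * e"] assms(2) by (auto intro: order.trans)

definition box_extension :: "real \<Rightarrow> (real^'n) set \<Rightarrow> ('k::field, 'n::finite) pmod \<Rightarrow> ('k, 'n) pmod
    \<Rightarrow> ('k, 'n) pmor \<Rightarrow> ('k, 'n) pmor" where
  "box_extension e G M N \<Phi> x = through M N \<Phi> x (box_point e G x) (vshift (2 * e) x)"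

context
  fixes M N :: "('k::field, 'n::finite) pmod" and \<Phi> \<Psi> :: "('k, 'n) pmor"
    and G :: "(real^'n) set" and e :: real
  assumes M: "is_pmod M" and N: "is_pmod N" and iso: "natural_iso_on G M N \<Phi> \<Psi>"
    and e: "0 \<le> e" and dense: "box_dense e G"
begin

lemma box_extension_carrier:
  "box_extension e G M N \<Phi> x \<in> carrier_mat (pdim N (vshift (2 * e) x)) (pdim M x)"
  unfolding box_extension_def
  by (rule through_carrier[OF M N iso box_point(1,2)[OF dense] box_point_le_vshift2[OF dense e]])

lemma box_extension_natural:
  assumes "x \<le> x'"
  shows "box_extension e G M N \<Phi> x' * pmap M x x' =
    pmap N (vshift (2 * e) x) (vshift (2 * e) x') * box_extension e G M N \<Phi> x"
proof -
  define y y' y\<^sub>2 where "y = box_point e G x" and "y' = box_point e G x'"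
    and "y\<^sub>2 = box_point e G (vshift e x')"
  have G: "y \<in> G" "y' \<in> G" "y\<^sub>2 \<in> G" unfolding y_def y'_def y\<^sub>2_def using box_point(1)[OF dense] by auto
  have le: "x \<le> y" "x' \<le> y'" "y \<le> y\<^sub>2" "y' \<le> y\<^sub>2" "y\<^sub>2 \<le> vshift (2 * e) x'" "x \<le> y'"
    "y \<le> vshift (2 * e) x" "y' \<le> vshift (2 * e) x'"
    using box_point[OF dense, of x] box_point[OF dense, of x'] box_point[OF dense, of "vshift e x'"]
      vshift_mono[OF assms, of e] assms box_point_le_vshift2[OF dense e]
    unfolding y_def y'_def y\<^sub>2_def by (auto intro: order.trans)
  have "box_extension e G M N \<Phi> x' * pmap M x x' = through M N \<Phi> x y' (vshift (2 * e) x')"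
    unfolding box_extension_def y'_def[symmetric]
    by (rule through_mult_pmap[OF M N iso G(2) assms le(2,8)])
  also have "\<dots> = through M N \<Phi> x y (vshift (2 * e) x')"
    using through_indep[OF M N iso G(2,3) le(6,4,5)] through_indep[OF M N iso G(1,3) le(1,3,5)] by simp
  also have "\<dots> = pmap N (vshift (2 * e) x) (vshift (2 * e) x') * box_extension e G M N \<Phi> x"
    unfolding box_extension_def y_def[symmetric]
    by (rule pmap_mult_through[OF M N iso G(1) le(1,7) vshift_mono[OF assms], symmetric])
  finally show ?thesis .
qed

lemma box_extension_inverse:
  "box_extension e G N M \<Psi> (vshift (2 * e) x) * box_extension e G M N \<Phi> x =
    pmap M x (vshift (2 * (2 * e)) x)"
proof -
  have t: "vshift (2 * e) (vshift (2 * e) x) = vshift (2 * (2 * e)) x"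
    unfolding vshift_vshift by (rule arg_cong[where f = "\<lambda>a. vshift a x"]) simp
  show ?thesis
    unfolding box_extension_def t[symmetric]
    by (rule through_inverse[OF M N iso box_point(1)[OF dense] box_point(1)[OF dense]
          box_point(2)[OF dense] box_point_le_vshift2[OF dense e]
          box_point(2)[OF dense] box_point_le_vshift2[OF dense e]])
qed

end

lemma interleaving_if_natural_iso_on_box_dense:
  assumes M: "is_pmod M" and N: "is_pmod N" and iso: "natural_iso_on G M N \<Phi> \<Psi>"
    and e: "0 \<le> e" and dense: "box_dense e G"
  shows "interleaving (2 * e) M N (box_extension e G M N \<Phi>) (box_extension e G N M \<Psi>)"
proof -
  have iso': "natural_iso_on G N M \<Psi> \<Phi>" by (rule natural_iso_on_sym[OF M N iso])
  show ?thesis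
    unfolding interleaving_def
    using box_extension_carrier[OF M N iso e dense] box_extension_carrier[OF N M iso' e dense]
      box_extension_natural[OF M N iso e dense] box_extension_natural[OF N M iso' e dense]
      box_extension_inverse[OF M N iso e dense] box_extension_inverse[OF N M iso' e dense]
    by blast
qed

section \<open>Zigzags whose arrows are invertible on a set\<close>

lemma natural_iso_on_if_ker_coker_zero:
  assumes g: "is_pmor A B g" and free: "\<forall>y\<in>G. ker_dim A B g y = 0 \<and> coker_dim A B g y = 0"
  shows "\<exists>h. natural_iso_on G A B g h"
proof -
  have "\<exists>h\<in>carrier_mat (pdim A y) (pdim B y). h * g y = 1\<^sub>m (pdim A y) \<and> g y * h = 1\<^sub>m (pdim B y)"
    if "y \<in> G" for y
  proof (rule inverse_if_full_rank)
    show "g y \<in> carrier_mat (pdim B y) (pdim A y)" using g by (simp add: is_pmor_def)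
    show "pdim A y \<le> vec_space.rank (pdim B y) (g y)" "pdim B y \<le> vec_space.rank (pdim B y) (g y)"
      using free that by (simp_all add: ker_dim_def coker_dim_def)
  qed
  then obtain h where "\<forall>y\<in>G. h y \<in> carrier_mat (pdim A y) (pdim B y) \<and>
      h y * g y = 1\<^sub>m (pdim A y) \<and> g y * h y = 1\<^sub>m (pdim B y)"
    using bchoice[of G] by (metis (no_types, lifting))
  then have "natural_iso_on G A B g h" using g unfolding natural_iso_on_def is_pmor_def by simp
  then show ?thesis by blast
qed

definition zigzag_defect :: "nat \<Rightarrow> (nat \<Rightarrow> ('k::field, 'n::finite) pmod) \<Rightarrow> (nat \<Rightarrow> ('k, 'n) pmod)
    \<Rightarrow> (nat \<Rightarrow> ('k, 'n) pmor) \<Rightarrow> (nat \<Rightarrow> ('k, 'n) pmor) \<Rightarrow> real^'n \<Rightarrow> nat" where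
  "zigzag_defect m X C l r y = (\<Sum>i\<in>{1..m}.
     (ker_dim (C i) (X (i - 1)) (l i) y + coker_dim (C i) (X (i - 1)) (l i) y) +
     (ker_dim (C i) (X i) (r i) y + coker_dim (C i) (X i) (r i) y))"

lemma zigzag_defect_eq_0_iff:
  "zigzag_defect m X C l r y = 0 \<longleftrightarrow> (\<forall>i\<in>{1..m}.
     ker_dim (C i) (X (i - 1)) (l i) y = 0 \<and> coker_dim (C i) (X (i - 1)) (l i) y = 0 \<and>
     ker_dim (C i) (X i) (r i) y = 0 \<and> coker_dim (C i) (X i) (r i) y = 0)"
  by (simp add: zigzag_defect_def ball_conj_distrib)

lemma is_zigzag_arrowD:
  assumes "is_zigzag M N m X C l r" "i \<in> {1..m}"
  shows "cubically_encoded (C i)" "cubically_encoded (X (i - 1))" "cubically_encoded (X i)"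
    "is_pmor (C i) (X (i - 1)) (l i)" "is_pmor (C i) (X i) (r i)"
  using assms unfolding is_zigzag_def by auto

lemma zigzag_natural_iso_on:
  assumes Z: "is_zigzag M N m X C l r" and G: "\<forall>y\<in>G. zigzag_defect m X C l r y = 0"
  shows "\<exists>\<Phi> \<Psi>. natural_iso_on G M N \<Phi> \<Psi>"
proof -
  have X: "is_pmod (X i)" if "i \<le> m" for i
    using Z that by (simp add: is_zigzag_def cubically_encoded_is_pmod)
  have "\<exists>\<Phi> \<Psi>. natural_iso_on G (X 0) (X k) \<Phi> \<Psi>" if "k \<le> m" for k
    using that
  proof (induction k)
    case 0
    show ?case using natural_iso_on_refl[OF X] by blast
  next
    case (Suc k)
    then obtain \<Phi> \<Psi> where IH: "natural_iso_on G (X 0) (X k) \<Phi> \<Psi>" by auto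
    have i: "Suc k \<in> {1..m}" using Suc.prems by simp
    have X0: "is_pmod (X 0)" and Xk: "is_pmod (X k)" and Xk': "is_pmod (X (Suc k))"
      using X Suc.prems by simp_all
    have C: "is_pmod (C (Suc k))" and l: "is_pmor (C (Suc k)) (X k) (l (Suc k))"
      and r: "is_pmor (C (Suc k)) (X (Suc k)) (r (Suc k))"
      using is_zigzag_arrowD[OF Z i] by (simp_all add: cubically_encoded_is_pmod)
    have "\<forall>y\<in>G. ker_dim (C (Suc k)) (X k) (l (Suc k)) y = 0 \<and> coker_dim (C (Suc k)) (X k) (l (Suc k)) y = 0"
      and "\<forall>y\<in>G. ker_dim (C (Suc k)) (X (Suc k)) (r (Suc k)) y = 0 \<and>
        coker_dim (C (Suc k)) (X (Suc k)) (r (Suc k)) y = 0"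
      using bspec[OF G[rule_format, unfolded zigzag_defect_eq_0_iff] i] by simp_all
    then obtain h\<^sub>l h\<^sub>r where "natural_iso_on G (C (Suc k)) (X k) (l (Suc k)) h\<^sub>l"
      and "natural_iso_on G (C (Suc k)) (X (Suc k)) (r (Suc k)) h\<^sub>r"
      using natural_iso_on_if_ker_coker_zero[OF l] natural_iso_on_if_ker_coker_zero[OF r] by blast
    then have "natural_iso_on G (X k) (X (Suc k)) (\<lambda>y. r (Suc k) y * h\<^sub>l y) (\<lambda>y. l (Suc k) y * h\<^sub>r y)"
      by (intro natural_iso_on_trans[OF Xk C Xk'] natural_iso_on_sym[OF C Xk])
    then show ?case using natural_iso_on_trans[OF X0 Xk Xk' IH] by blast
  qed
  then show ?thesis using Z by (auto simp: is_zigzag_def)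
qed

section \<open>Measurability of cubically encoded data\<close>

lemma is_cube_borel:
  fixes A :: "(real^'n::finite) set"
  assumes "is_cube A"
  shows "A \<in> sets borel"
proof -
  obtain I where I: "\<forall>i. is_interval (I i)" "A = {x. \<forall>i. x $ i \<in> I i}"
    using assms unfolding is_cube_def by blast
  have nth: "(\<lambda>x::real^'n. x $ i) \<in> borel_measurable borel" for i
    by (intro borel_measurable_continuous_onI continuous_intros)
  have "{x::real^'n. x $ i \<in> I i} \<in> sets borel" for i
    using measurable_sets[OF nth real_interval_borel_measurable[OF I(1)[rule_format, of i]]]
    by (simp add: vimage_def)
  then have "(\<Inter>i. {x::real^'n. x $ i \<in> I i}) \<in> sets borel"
    by (intro sets.finite_INT) auto
  moreover have "A = (\<Inter>i. {x::real^'n. x $ i \<in> I i})" using I(2) by auto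
  ultimately show ?thesis by simp
qed

lemma is_cube_Int:
  fixes A :: "(real^'n::finite) set"
  assumes "is_cube A" "is_cube B"
  shows "is_cube (A \<inter> B)"
proof -
  obtain I where I: "\<forall>i. is_interval (I i)" "A = {x. \<forall>i. x $ i \<in> I i}"
    using assms(1) unfolding is_cube_def by blast
  obtain J where J: "\<forall>i. is_interval (J i)" "B = {x. \<forall>i. x $ i \<in> J i}"
    using assms(2) unfolding is_cube_def by blast
  show ?thesis unfolding is_cube_def
    by (rule exI[of _ "\<lambda>i. I i \<inter> J i"]) (use I J in \<open>auto intro: is_interval_Int\<close>)
qed

lemma is_cube_inf:
  fixes A :: "(real^'n::finite) set"
  assumes "is_cube A" "x \<in> A" "y \<in> A"
  shows "inf x y \<in> A"
proof -
  obtain I where I: "A = {x. \<forall>i. x $ i \<in> I i}"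
    using assms(1) unfolding is_cube_def by blast
  have "inf x y $ i = x $ i \<or> inf x y $ i = y $ i" for i
    by (simp add: inf_vec_def inf_real_def min_def)
  then show ?thesis using assms(2,3) unfolding I by (simp, metis)
qed

lemma finite_union_of_cubes_Int:
  assumes "finite_union_of_cubes S" "finite_union_of_cubes T"
  shows "finite_union_of_cubes (S \<inter> T)"
proof -
  obtain \<C> where \<C>: "finite \<C>" "\<forall>A\<in>\<C>. is_cube A" "S = \<Union>\<C>"
    using assms(1) unfolding finite_union_of_cubes_def by blast
  obtain \<D> where \<D>: "finite \<D>" "\<forall>B\<in>\<D>. is_cube B" "T = \<Union>\<D>"
    using assms(2) unfolding finite_union_of_cubes_def by blast
  let ?\<P> = "(\<lambda>(A, B). A \<inter> B) ` (\<C> \<times> \<D>)"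
  have "finite ?\<P>" using \<C>(1) \<D>(1) by simp
  moreover have "\<forall>P\<in>?\<P>. is_cube P" using \<C>(2) \<D>(2) by (auto intro: is_cube_Int)
  moreover have "S \<inter> T = \<Union>?\<P>" using \<C>(3) \<D>(3) by blast
  ultimately show ?thesis unfolding finite_union_of_cubes_def by blast
qed

(* The part of a cubical encoding that measurability depends on: the order on the values plays
   no role. *)
definition cubical_encoding :: "(real^'n::finite \<Rightarrow> 'a) \<Rightarrow> bool" where
  "cubical_encoding e \<longleftrightarrow> finite (range e) \<and> (\<forall>p\<in>range e. finite_union_of_cubes {x. e x = p})"

lemma cubical_encoding_pair:
  assumes e\<^sub>1: "cubical_encoding e\<^sub>1" and e\<^sub>2: "cubical_encoding e\<^sub>2"
  shows "cubical_encoding (\<lambda>x. (e\<^sub>1 x, e\<^sub>2 x))"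
  unfolding cubical_encoding_def
proof (intro conjI ballI)
  have "range (\<lambda>x. (e\<^sub>1 x, e\<^sub>2 x)) \<subseteq> range e\<^sub>1 \<times> range e\<^sub>2" by auto
  then show "finite (range (\<lambda>x. (e\<^sub>1 x, e\<^sub>2 x)))"
    using e\<^sub>1 e\<^sub>2 unfolding cubical_encoding_def by (simp add: finite_subset)
next
  fix p assume "p \<in> range (\<lambda>x. (e\<^sub>1 x, e\<^sub>2 x))"
  then obtain z where "p = (e\<^sub>1 z, e\<^sub>2 z)" by blast
  then have "{x. (e\<^sub>1 x, e\<^sub>2 x) = p} = {x. e\<^sub>1 x = e\<^sub>1 z} \<inter> {x. e\<^sub>2 x = e\<^sub>2 z}" by auto
  moreover have "finite_union_of_cubes {x. e\<^sub>1 x = e\<^sub>1 z}" "finite_union_of_cubes {x. e\<^sub>2 x = e\<^sub>2 z}"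
    using e\<^sub>1 e\<^sub>2 unfolding cubical_encoding_def by simp_all
  ultimately show "finite_union_of_cubes {x. (e\<^sub>1 x, e\<^sub>2 x) = p}"
    by (simp add: finite_union_of_cubes_Int)
qed

lemma measurable_if_constant_on_cover:
  fixes f :: "'a \<Rightarrow> 'b::topological_space"
  assumes "countable \<A>" and sets: "\<And>A. A \<in> \<A> \<Longrightarrow> A \<in> sets M" and "space M \<subseteq> \<Union>\<A>"
    and const: "\<And>A x z. A \<in> \<A> \<Longrightarrow> x \<in> A \<Longrightarrow> z \<in> A \<Longrightarrow> f x = f z"
  shows "f \<in> borel_measurable M"
proof (rule measurable_piecewise_restrict[OF assms(1) _ assms(3)])
  show "A \<inter> space M \<in> sets M" if "A \<in> \<A>" for A
    using sets[OF that] by (simp add: sets.Int_space_eq2)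
  show "f \<in> borel_measurable (restrict_space M A)" if "A \<in> \<A>" for A
  proof -
    have "f \<in> borel_measurable (restrict_space M A) \<longleftrightarrow>
        (\<lambda>_. f (SOME z. z \<in> A)) \<in> borel_measurable (restrict_space M A)"
    proof (rule measurable_cong)
      fix w assume "w \<in> space (restrict_space M A)"
      then have "w \<in> A" by (simp add: space_restrict_space)
      moreover from this have "(SOME z. z \<in> A) \<in> A" by (rule someI)
      ultimately show "f w = f (SOME z. z \<in> A)" by (rule const[OF that])
    qed
    then show ?thesis by simp
  qed
qed

lemma measurable_if_cubical_encoding:
  fixes f :: "real^'n::finite \<Rightarrow> 'b::topological_space"
  assumes e: "cubical_encoding e" and const: "\<And>x y. x \<le> y \<Longrightarrow> e x = e y \<Longrightarrow> f x = f y"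
  shows "f \<in> borel_measurable lborel"
proof -
  have "\<forall>p\<in>range e. \<exists>\<C>. finite \<C> \<and> (\<forall>A\<in>\<C>. is_cube A) \<and> {x. e x = p} = \<Union>\<C>"
    using e unfolding cubical_encoding_def finite_union_of_cubes_def by simp
  from bchoice[OF this] obtain \<C>
    where "\<forall>p\<in>range e. finite (\<C> p) \<and> (\<forall>A\<in>\<C> p. is_cube A) \<and> {x. e x = p} = \<Union>(\<C> p)"
    by blast
  then have cubes_finite: "finite (\<C> p)" and cubes: "\<forall>A\<in>\<C> p. is_cube A"
    and fiber: "{x. e x = p} = \<Union>(\<C> p)"
    if "p \<in> range e" for p
    using that by blast+
  let ?cubes = "\<Union>p\<in>range e. \<C> p"
  show ?thesis
  proof (rule measurable_if_constant_on_cover)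
    have "finite ?cubes"
    proof (rule finite_UN_I)
      show "finite (range e)" using e by (simp add: cubical_encoding_def)
    qed (rule cubes_finite)
    then show "countable ?cubes" by (rule countable_finite)
    show "A \<in> sets lborel" if "A \<in> ?cubes" for A
      using that cubes is_cube_borel by fastforce
    show "space lborel \<subseteq> \<Union>?cubes"
    proof
      fix x
      have "x \<in> {y. e y = e x}" by simp
      then obtain A where "A \<in> \<C> (e x)" "x \<in> A" unfolding fiber[OF rangeI] by blast
      then show "x \<in> \<Union>?cubes" by blast
    qed
    \<comment> \<open>The infimum of two points of a cube lies in the cube and below both.\<close>
    show "f x = f z" if "A \<in> ?cubes" "x \<in> A" "z \<in> A" for A x z
    proof -
      obtain p where p: "p \<in> range e" "A \<in> \<C> p" using \<open>A \<in> ?cubes\<close> by blast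
      have "inf x z \<in> A" using cubes[OF p(1)] p(2) that(2,3) is_cube_inf by blast
      then have "e x = p" "e z = p" "e (inf x z) = p" using fiber[OF p(1)] p(2) that(2,3) by blast+
      then show ?thesis using const[of "inf x z" x] const[of "inf x z" z] by simp
    qed
  qed
qed

definition pmap_invertible_on_fibers :: "('k::field, 'n::finite) pmod \<Rightarrow> (real^'n \<Rightarrow> 'a) \<Rightarrow> bool" where
  "pmap_invertible_on_fibers M e \<longleftrightarrow> (\<forall>x y. x \<le> y \<longrightarrow> e x = e y \<longrightarrow>
     (\<exists>Q\<in>carrier_mat (pdim M x) (pdim M y). Q * pmap M x y = 1\<^sub>m (pdim M x) \<and> pmap M x y * Q = 1\<^sub>m (pdim M y)))"

lemma cubically_encoded_fiberwise_invertible: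
  fixes M :: "('k::field, 'n::finite) pmod"
  assumes "cubically_encoded M"
  shows "\<exists>e :: real^'n \<Rightarrow> nat. cubical_encoding e \<and> pmap_invertible_on_fibers M e"
  using assms unfolding cubically_encoded_def
proof (elim conjE exE, goal_cases)
  case (1 P le e d G \<eta> \<theta>)
  then have M: "is_pmod M" and P: "finite P" "\<forall>x. e x \<in> P"
    and fibers: "\<forall>p\<in>P. finite_union_of_cubes {x. e x = p}" and G_id: "\<forall>p\<in>P. G p p = 1\<^sub>m (d p)"
    and iso: "\<forall>x. \<eta> x \<in> carrier_mat (d (e x)) (pdim M x) \<and> \<theta> x \<in> carrier_mat (pdim M x) (d (e x)) \<and>
      \<theta> x * \<eta> x = 1\<^sub>m (pdim M x) \<and> \<eta> x * \<theta> x = 1\<^sub>m (d (e x))"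
    and nat: "\<forall>x y. x \<le> y \<longrightarrow> \<eta> y * pmap M x y = G (e x) (e y) * \<eta> x"
    by blast+
  have "cubical_encoding e"
    unfolding cubical_encoding_def using P fibers by (auto intro: finite_subset)
  moreover have "\<exists>Q\<in>carrier_mat (pdim M x) (pdim M y).
      Q * pmap M x y = 1\<^sub>m (pdim M x) \<and> pmap M x y * Q = 1\<^sub>m (pdim M y)"
    if xy: "x \<le> y" and exy: "e x = e y" for x y
  proof
    have iso_x: "\<eta> x \<in> carrier_mat (d (e x)) (pdim M x)" "\<theta> x \<in> carrier_mat (pdim M x) (d (e x))"
      "\<theta> x * \<eta> x = 1\<^sub>m (pdim M x)" "\<eta> x * \<theta> x = 1\<^sub>m (d (e x))"
      using iso by blast+
    have iso_y: "\<theta> y \<in> carrier_mat (pdim M y) (d (e x))" "\<eta> y \<in> carrier_mat (d (e x)) (pdim M y)"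
      "\<eta> y * \<theta> y = 1\<^sub>m (d (e x))" "\<theta> y * \<eta> y = 1\<^sub>m (pdim M y)"
      using iso unfolding exy by blast+
    have "\<eta> y * pmap M x y = \<eta> x"
      using nat xy exy G_id P(2) carrier_matD[OF iso_x(1)] by simp
    then have pmap_eq: "pmap M x y = \<theta> y * \<eta> x"
      using iso_y carrier_matD[OF iso_y(1)] carrier_matD[OF iso_y(2)] pmap_dims[OF M xy]
      by (metis mult_left_inverse_assoc)
    show "\<theta> x * \<eta> y \<in> carrier_mat (pdim M x) (pdim M y)" using iso_x iso_y by auto
    show "\<theta> x * \<eta> y * pmap M x y = 1\<^sub>m (pdim M x) \<and> pmap M x y * (\<theta> x * \<eta> y) = 1\<^sub>m (pdim M y)"
      unfolding pmap_eq using inverse_of_mult[OF iso_x iso_y] by simp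
  qed
  ultimately show ?case unfolding pmap_invertible_on_fibers_def by blast
qed

lemma ker_coker_dim_measurable:
  fixes A B :: "('k::field, 'n::finite) pmod"
  assumes A: "cubically_encoded A" and B: "cubically_encoded B" and g: "is_pmor A B g"
  shows "(\<lambda>y. ennreal (real (ker_dim A B g y))) \<in> borel_measurable lborel"
    and "(\<lambda>y. ennreal (real (coker_dim A B g y))) \<in> borel_measurable lborel"
proof -
  obtain e\<^sub>A :: "real^'n \<Rightarrow> nat" where e\<^sub>A: "cubical_encoding e\<^sub>A" and iso\<^sub>A: "pmap_invertible_on_fibers A e\<^sub>A"
    using cubically_encoded_fiberwise_invertible[OF A] by blast
  obtain e\<^sub>B :: "real^'n \<Rightarrow> nat" where e\<^sub>B: "cubical_encoding e\<^sub>B" and iso\<^sub>B: "pmap_invertible_on_fibers B e\<^sub>B"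
    using cubically_encoded_fiberwise_invertible[OF B] by blast
  have pA: "is_pmod A" and pB: "is_pmod B" using A B by (simp_all add: cubically_encoded_is_pmod)
  have const: "ker_dim A B g x = ker_dim A B g y \<and> coker_dim A B g x = coker_dim A B g y"
    if xy: "x \<le> y" and exy: "(e\<^sub>A x, e\<^sub>B x) = (e\<^sub>A y, e\<^sub>B y)" for x y
  proof -
    obtain Q\<^sub>A where Q\<^sub>A: "Q\<^sub>A \<in> carrier_mat (pdim A x) (pdim A y)"
      "Q\<^sub>A * pmap A x y = 1\<^sub>m (pdim A x)" "pmap A x y * Q\<^sub>A = 1\<^sub>m (pdim A y)"
      using iso\<^sub>A xy exy unfolding pmap_invertible_on_fibers_def by blast
    obtain Q\<^sub>B where Q\<^sub>B: "Q\<^sub>B \<in> carrier_mat (pdim B x) (pdim B y)"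
      "Q\<^sub>B * pmap B x y = 1\<^sub>m (pdim B x)" "pmap B x y * Q\<^sub>B = 1\<^sub>m (pdim B y)"
      using iso\<^sub>B xy exy unfolding pmap_invertible_on_fibers_def by blast
    have "vec_space.rank (pdim B y) (g y) = vec_space.rank (pdim B x) (g x)"
      using g xy unfolding is_pmor_def
      by (intro rank_eq_if_commute[OF _ _ pmap_carrier[OF pA xy] Q\<^sub>A(1,3) pmap_carrier[OF pB xy] Q\<^sub>B(1,2)])
        simp_all
    moreover have "pdim A x = pdim A y" by (rule dim_eq_if_inverse[OF Q\<^sub>A(1) pmap_carrier[OF pA xy] Q\<^sub>A(2,3)])
    moreover have "pdim B x = pdim B y" by (rule dim_eq_if_inverse[OF Q\<^sub>B(1) pmap_carrier[OF pB xy] Q\<^sub>B(2,3)])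
    ultimately show ?thesis unfolding ker_dim_def coker_dim_def by simp
  qed
  show "(\<lambda>y. ennreal (real (ker_dim A B g y))) \<in> borel_measurable lborel"
    by (rule measurable_if_cubical_encoding[OF cubical_encoding_pair[OF e\<^sub>A e\<^sub>B]]) (use const in auto)
  show "(\<lambda>y. ennreal (real (coker_dim A B g y))) \<in> borel_measurable lborel"
    by (rule measurable_if_cubical_encoding[OF cubical_encoding_pair[OF e\<^sub>A e\<^sub>B]]) (use const in auto)
qed

lemma arrow_cost_eq_integral:
  assumes "cubically_encoded A" "cubically_encoded B" "is_pmor A B g"
  shows "arrow_cost A B g = (\<integral>\<^sup>+y. ennreal (real (ker_dim A B g y + coker_dim A B g y)) \<partial>lborel)"
  unfolding arrow_cost_def hilbert_amp_def
  by (simp add: nn_integral_add[OF ker_coker_dim_measurable[OF assms]])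

lemma zigzag_cost_eq_integral:
  assumes Z: "is_zigzag M N m X C l r"
  shows "zigzag_cost m X C l r = (\<integral>\<^sup>+y. ennreal (real (zigzag_defect m X C l r y)) \<partial>lborel)"
proof -
  let ?d\<^sub>l = "\<lambda>i y. ennreal (real (ker_dim (C i) (X (i - 1)) (l i) y + coker_dim (C i) (X (i - 1)) (l i) y))"
  let ?d\<^sub>r = "\<lambda>i y. ennreal (real (ker_dim (C i) (X i) (r i) y + coker_dim (C i) (X i) (r i) y))"
  have meas: "?d\<^sub>l i \<in> borel_measurable lborel" "?d\<^sub>r i \<in> borel_measurable lborel" if "i \<in> {1..m}" for i
    using ker_coker_dim_measurable[OF is_zigzag_arrowD(1,2,4)[OF Z that]]
      ker_coker_dim_measurable[OF is_zigzag_arrowD(1,3,5)[OF Z that]]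
    by (simp_all add: borel_measurable_add)
  have "ennreal (real (zigzag_defect m X C l r y)) = (\<Sum>i\<in>{1..m}. ?d\<^sub>l i y + ?d\<^sub>r i y)" for y
    unfolding ennreal_of_nat_eq_real_of_nat[symmetric] by (simp add: zigzag_defect_def)
  then have "(\<integral>\<^sup>+y. ennreal (real (zigzag_defect m X C l r y)) \<partial>lborel) =
      (\<integral>\<^sup>+y. (\<Sum>i\<in>{1..m}. ?d\<^sub>l i y + ?d\<^sub>r i y) \<partial>lborel)"
    by simp
  also have "\<dots> = (\<Sum>i\<in>{1..m}. (\<integral>\<^sup>+y. ?d\<^sub>l i y + ?d\<^sub>r i y \<partial>lborel))"
    using meas by (intro nn_integral_sum) (simp add: borel_measurable_add)
  also have "\<dots> = (\<Sum>i\<in>{1..m}. (\<integral>\<^sup>+y. ?d\<^sub>l i y \<partial>lborel) + (\<integral>\<^sup>+y. ?d\<^sub>r i y \<partial>lborel))"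
    using meas by (intro sum.cong refl nn_integral_add) simp_all
  also have "\<dots> = zigzag_cost m X C l r"
    unfolding zigzag_cost_def
    using arrow_cost_eq_integral[OF is_zigzag_arrowD(1,2,4)[OF Z]]
      arrow_cost_eq_integral[OF is_zigzag_arrowD(1,3,5)[OF Z]]
    by simp
  finally show ?thesis ..
qed

section \<open>Interleaving distance and path metric\<close>

lemma emeasure_cbox_vshift:
  fixes x :: "real^'n::finite"
  assumes "0 \<le> e"
  shows "emeasure lborel (cbox x (vshift e x)) = ennreal (e ^ CARD('n))"
proof -
  have side: "(vshift e x - x) \<bullet> b = e" if "b \<in> Basis" for b
    using that by (auto simp: vshift_def Basis_vec_def inner_axis)
  have "x \<bullet> b \<le> vshift e x \<bullet> b" if "b \<in> Basis" for b
    using side[OF that] assms unfolding inner_diff_left by linarith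
  then show ?thesis using side by (simp add: emeasure_lborel_cbox_eq)
qed

lemma box_dense_zigzag_defect_zeros:
  fixes M N :: "('k::field, 'n::finite) pmod"
  assumes Z: "is_zigzag M N m X C l r" and cost: "zigzag_cost m X C l r < ennreal (e ^ CARD('n))"
    and e: "0 \<le> e"
  shows "box_dense e {y. zigzag_defect m X C l r y = 0}"
  unfolding box_dense_def
proof (rule ccontr)
  assume "\<not> (\<forall>x. \<exists>y\<in>{y. zigzag_defect m X C l r y = 0}. x \<le> y \<and> y \<le> vshift e x)"
  then obtain x where bad: "\<And>y. x \<le> y \<Longrightarrow> y \<le> vshift e x \<Longrightarrow> zigzag_defect m X C l r y \<noteq> 0"
    by auto
  have ind: "indicator (cbox x (vshift e x)) y \<le> ennreal (real (zigzag_defect m X C l r y))" for y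
  proof (cases "y \<in> cbox x (vshift e x)")
    case True
    then have "x \<le> y" "y \<le> vshift e x"
      by (simp_all add: mem_box_cart Finite_Cartesian_Product.less_eq_vec_def)
    then have "1 \<le> zigzag_defect m X C l r y"
      using bad by (simp add: Suc_le_eq)
    then show ?thesis using True by simp
  qed simp
  have "ennreal (e ^ CARD('n)) = (\<integral>\<^sup>+y. indicator (cbox x (vshift e x)) y \<partial>lborel)"
    using emeasure_cbox_vshift[OF e, of x] by simp
  also have "\<dots> \<le> (\<integral>\<^sup>+y. ennreal (real (zigzag_defect m X C l r y)) \<partial>lborel)"
    by (rule nn_integral_mono) (rule ind)
  also have "\<dots> = zigzag_cost m X C l r"
    by (rule zigzag_cost_eq_integral[OF Z, symmetric])
  finally show False using cost by simp
qed

lemma interleaving_if_zigzag_cost_less: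
  fixes M N :: "('k::field, 'n::finite) pmod"
  assumes Z: "is_zigzag M N m X C l r" and cost: "zigzag_cost m X C l r < ennreal (e ^ CARD('n))"
    and e: "0 \<le> e"
  shows "\<exists>\<phi> \<psi>. interleaving (2 * e) M N \<phi> \<psi>"
proof -
  let ?G = "{y. zigzag_defect m X C l r y = 0}"
  have "\<exists>\<Phi> \<Psi>. natural_iso_on ?G M N \<Phi> \<Psi>" by (rule zigzag_natural_iso_on[OF Z]) simp
  then obtain \<Phi> \<Psi> where iso: "natural_iso_on ?G M N \<Phi> \<Psi>" by blast
  have "cubically_encoded M" "cubically_encoded N"
    using Z unfolding is_zigzag_def by auto
  then have M: "is_pmod M" and N: "is_pmod N" by (simp_all add: cubically_encoded_is_pmod)
  show ?thesis
    using interleaving_if_natural_iso_on_box_dense[OF M N iso e box_dense_zigzag_defect_zeros[OF Z cost e]] by blast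
qed

lemma interleaving_distance_le_of_path_metric_less:
  fixes M N :: "('k::field, 'n::finite) pmod"
  assumes "hilbert_path_metric M N < ennreal (e ^ CARD('n))" and "0 < e"
  shows "interleaving_distance M N \<le> ennreal (2 * e)"
proof -
  have "\<exists>c\<in>{zigzag_cost m X C l r | m X C l r. is_zigzag M N m X C l r}. c < ennreal (e ^ CARD('n))"
    using assms(1) unfolding hilbert_path_metric_def by (simp only: Inf_less_iff)
  then obtain m X C l r where Z: "is_zigzag M N m X C l r"
    and cost: "zigzag_cost m X C l r < ennreal (e ^ CARD('n))"
    by blast
  obtain \<phi> \<psi> where "interleaving (2 * e) M N \<phi> \<psi>"
    using interleaving_if_zigzag_cost_less[OF Z cost] assms(2) by auto
  then have "2 * e \<in> {\<epsilon>. \<epsilon> > 0 \<and> (\<exists>\<phi> \<psi>. interleaving \<epsilon> M N \<phi> \<psi>)}" using assms(2) by auto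
  then show ?thesis unfolding interleaving_distance_def by (rule Inf_lower[OF imageI])
qed

lemma interleaving_distance_le_root:
  fixes M N :: "('k::field, 'n::finite) pmod"
  assumes "hilbert_path_metric M N = ennreal c" and "0 \<le> c"
  shows "interleaving_distance M N \<le> ennreal (2 * c powr (1 / CARD('n)))"
proof (rule ennreal_le_epsilon)
  fix \<delta> :: real assume "0 < \<delta>"
  define e where "e = c powr (1 / CARD('n)) + \<delta> / 2"
  have "c = (c powr (1 / CARD('n))) ^ CARD('n)"
  proof (cases "c = 0")
    case False
    then have "(c powr (1 / CARD('n))) ^ CARD('n) = (c powr (1 / CARD('n))) powr CARD('n)"
      using assms(2) by (simp add: powr_realpow)
    then show ?thesis using False assms(2) by (simp add: powr_powr)
  qed simp
  also have "\<dots> < e ^ CARD('n)"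
    unfolding e_def using \<open>0 < \<delta>\<close> by (intro power_strict_mono) auto
  finally have "hilbert_path_metric M N < ennreal (e ^ CARD('n))"
    using assms by (simp add: ennreal_less_iff)
  moreover have "0 < e" unfolding e_def using \<open>0 < \<delta>\<close> by (intro add_nonneg_pos) simp_all
  ultimately have "interleaving_distance M N \<le> ennreal (2 * e)"
    by (rule interleaving_distance_le_of_path_metric_less)
  also have "\<dots> = ennreal (2 * c powr (1 / CARD('n))) + ennreal \<delta>"
    unfolding e_def using \<open>0 < \<delta>\<close> by (simp add: algebra_simps flip: ennreal_plus)
  finally show "interleaving_distance M N \<le> ennreal (2 * c powr (1 / CARD('n))) + ennreal \<delta>" .
qed

theorem mainTheorem3:
  fixes M N :: "('k::field, 'n::finite) pmod"
  assumes "cubically_encoded M" and "cubically_encoded N"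
  shows "interleaving_distance M N \<le>
           (if hilbert_path_metric M N = (Orderings.top::ennreal) then Orderings.top
            else ennreal (4 * (enn2real (hilbert_path_metric M N)) powr (1 / real CARD('n))))"
proof (cases "hilbert_path_metric M N = Orderings.top")
  case False
  define c where "c = enn2real (hilbert_path_metric M N)"
  have "hilbert_path_metric M N = ennreal c" "0 \<le> c"
    using False unfolding c_def by (simp_all add: ennreal_enn2real_if)
  then have "interleaving_distance M N \<le> ennreal (2 * c powr (1 / CARD('n)))"
    by (rule interleaving_distance_le_root)
  also have "\<dots> \<le> ennreal (4 * c powr (1 / CARD('n)))" by (intro ennreal_leI) simp
  finally show ?thesis using False unfolding c_def by simp
qed simp

end
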